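(* Assume (A1), (A2), (A4) for problem (DC), and assume (instead of (A3)) only that each $\nabla f_i$ is Lipschitz continuous on $\mathcal X$ with constant $L_{\nabla f_i}$. Let $\boldsymbol\tau>\mathbf 0$ with $\tau^{\min}:=\min_i\tau_i>2\sum_{i=1}^IL_{\nabla f_i}$, and let $\gamma^\nu=1$ for all $\nu$. Let $\{\mathbf x^\nu\}$ be generated by Algorithm 1 (so $\mathbf x^{\nu+1}=\hat{\mathbf x}(\mathbf x^\nu)$) from some $\mathbf x^0\in\Xi$. Then either $\mathbf x^\nu$ is a stationary point of (DC) for some finite $\nu$, or $\{\mathbf x^\nu\}$ has at least one limit point and every limit point is a stationary point of (DC).
   Context: Let $I\ge1$, $n_1,\dots,n_I\ge1$, $n=\sum_i n_i$. Vectors $\mathbf x\in\mathbb R^n$ are partitioned as $\mathbf x=(\mathbf x_i)_{i=1}^I$, $\mathbf x_i\in\mathbb R^{n_i}$; $\mathbf x_{-i}=(\mathbf x_j)_{j\ne i}$, and $(\mathbf x_i,\mathbf y_{-i})$ is the vector with $i$-th block $\mathbf x_i$ and $j$-th block $\mathbf y_j$ for $j\neq i$. Given sets $\mathcal X_i\subseteq\mathbb R^{n_i}$, functions $f_i,g_i:\mathbb R^n\to\mathbb R$ and $\mathbf h=(h_1,\dots,h_{n_c}):\mathbb R^n\to\mathbb R^{n_c}$, problem (DC) is: minimize $\theta(\mathbf x)=\sum_{i=1}^I(f_i(\mathbf x)-g_i(\mathbf x))$ subject to $\mathbf x_i\in\mathcal X_i$ for all $i$ and $\mathbf h(\mathbf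 x)\le\mathbf 0$. Let $\mathcal X=\prod_i\mathcal X_i$, $\mathcal X_{-i}=\prod_{j\ne i}\mathcal X_j$, $\Xi=\{\mathbf x\in\mathcal X:\mathbf h(\mathbf x)\le\mathbf 0\}$. Assumptions: (A1) each $f_i,g_i,h_j$ is convex and continuously differentiable on an open set containing $\mathcal X$; (A2) each $\mathcal X_i$ is nonempty, closed, convex; (A4) for some $\mathbf x^0\in\Xi$ the set $\{\mathbf x\in\Xi:\theta(\mathbf x)\le\theta(\mathbf x^0)\}$ is compact. A stationary point of (DC) is $\mathbf x^\star\in\Xi$ with $\nabla\theta(\mathbf x^\star)^T(\mathbf y-\mathbf x^\star)\ge0$ for all $\mathbf y\in\Xi$. For $\mathbf y\in\mathcal X$ and $\boldsymbol\tau=(\tau_i)>\mathbf 0$ let $\tilde\theta(\mathbf x;\mathbf y)=\sum_i\tilde\theta_i(\mathbf x_i;\mathbf y)$ with $\tilde\theta_i(\mathbf x_i;\mathbf y)=f_i(\mathbf x_i,\mathbf y_{-i})+\sum_{j\ne i}\nabla_{\mathbf x_i}f_j(\mathbf y)^T(\mathbf x_i-\mathbf y_i)-g_i(\mathbf y)-\sum_{j=1}^I\nabla_{\mathbf x_i}g_j(\mathbf y)^T(\mathbf x_i-\mathbf y_i)+\tfrac{\tau_i}{2}\|\mathbf x_i-\mathbf y_i\|^2,$ and $\hat{\mathbf x}(\mathbf y):=\arg\min_{\mathbf x\in\Xi}\tilde\theta(\mathbf x;\mathbf y)$ (unique, since $\tilde\theta(\cdot;\mathbf y)$ is strongly convex).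 Algorithm 1: given $\boldsymbol\tau$, $\{\gamma^\nu\}\subset(0,1]$ and $\mathbf x^0\in\Xi$, set $\mathbf x^{\nu+1}=\mathbf x^\nu+\gamma^\nu(\hat{\mathbf x}(\mathbf x^\nu)-\mathbf x^\nu)$. *)

theory Defs
  imports "HOL-Analysis.Analysis"
begin

text \<open>The block structure is given by a
  map blk :: 'n => 'i assigning each coordinate to its block (blocks indexed by the
  finite type 'i).  A block x_i in R^{n_i} is represented by its zero-padded copy
  block_proj blk i x in the coordinate subspace of block i.\<close>

definition block_proj :: "('n \<Rightarrow> 'i) \<Rightarrow> 'i \<Rightarrow> real^'n \<Rightarrow> real^'n" where
  "block_proj blk i x = (\<chi> k. if blk k = i then x $ k else 0)"

definition block_repl :: "('n \<Rightarrow> 'i) \<Rightarrow> 'i \<Rightarrow> real^'n \<Rightarrow> real^'n \<Rightarrow> real^'n" where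
  "block_repl blk i x y = (\<chi> k. if blk k = i then x $ k else y $ k)"

definition prod_set :: "('n \<Rightarrow> 'i) \<Rightarrow> ('i \<Rightarrow> (real^'n) set) \<Rightarrow> (real^'n) set" where
  "prod_set blk Xs = {x. \<forall>i. block_proj blk i x \<in> Xs i}"

definition feas_set :: "('n \<Rightarrow> 'i) \<Rightarrow> ('i \<Rightarrow> (real^'n) set) \<Rightarrow> nat \<Rightarrow> (nat \<Rightarrow> real^'n \<Rightarrow> real)
    \<Rightarrow> (real^'n) set" where
  "feas_set blk Xs nc h = {x \<in> prod_set blk Xs. \<forall>j<nc. h j x \<le> 0}"

definition dc_obj :: "('i::finite \<Rightarrow> real^'n \<Rightarrow> real) \<Rightarrow> ('i \<Rightarrow> real^'n \<Rightarrow> real) \<Rightarrow> real^'n \<Rightarrow> real" where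
  "dc_obj f g x = (\<Sum>i\<in>UNIV. f i x - g i x)"

definition dc_stationary :: "('n \<Rightarrow> 'i::finite) \<Rightarrow> ('i \<Rightarrow> (real^'n) set) \<Rightarrow> nat
    \<Rightarrow> (nat \<Rightarrow> real^'n \<Rightarrow> real) \<Rightarrow> ('i \<Rightarrow> real^'n \<Rightarrow> real^'n) \<Rightarrow> ('i \<Rightarrow> real^'n \<Rightarrow> real^'n)
    \<Rightarrow> real^'n \<Rightarrow> bool" where
  "dc_stationary blk Xs nc h Df Dg xs \<longleftrightarrow> xs \<in> feas_set blk Xs nc h \<and>
     (\<forall>y \<in> feas_set blk Xs nc h. (\<Sum>i\<in>UNIV. Df i xs - Dg i xs) \<bullet> (y - xs) \<ge> 0)"

text \<open>The surrogate tilde-theta(x; y) = sum_i tilde-theta_i(x_i; y).  Note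
  nabla_{x_i} phi(y)^T (x_i - y_i) = nabla phi(y) . block_proj blk i (x - y).\<close>
definition surr :: "('n \<Rightarrow> 'i::finite) \<Rightarrow> ('i \<Rightarrow> real^'n \<Rightarrow> real) \<Rightarrow> ('i \<Rightarrow> real^'n \<Rightarrow> real)
    \<Rightarrow> ('i \<Rightarrow> real^'n \<Rightarrow> real^'n) \<Rightarrow> ('i \<Rightarrow> real^'n \<Rightarrow> real^'n) \<Rightarrow> ('i \<Rightarrow> real)
    \<Rightarrow> real^'n \<Rightarrow> real^'n \<Rightarrow> real" where
  "surr blk f g Df Dg \<tau> x y = (\<Sum>i\<in>UNIV.
       f i (block_repl blk i x y)
     + (\<Sum>j\<in>UNIV - {i}. Df j y \<bullet> block_proj blk i (x - y))
     - g i y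
     - (\<Sum>j\<in>UNIV. Dg j y \<bullet> block_proj blk i (x - y))
     + \<tau> i / 2 * (norm (block_proj blk i (x - y)))\<^sup>2)"

definition xhat :: "('n \<Rightarrow> 'i::finite) \<Rightarrow> ('i \<Rightarrow> (real^'n) set) \<Rightarrow> nat \<Rightarrow> (nat \<Rightarrow> real^'n \<Rightarrow> real)
    \<Rightarrow> ('i \<Rightarrow> real^'n \<Rightarrow> real) \<Rightarrow> ('i \<Rightarrow> real^'n \<Rightarrow> real)
    \<Rightarrow> ('i \<Rightarrow> real^'n \<Rightarrow> real^'n) \<Rightarrow> ('i \<Rightarrow> real^'n \<Rightarrow> real^'n) \<Rightarrow> ('i \<Rightarrow> real)
    \<Rightarrow> real^'n \<Rightarrow> real^'n" where
  "xhat blk Xs nc h f g Df Dg \<tau> y = (THE x. x \<in> feas_set blk Xs nc h \<and>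
      (\<forall>z \<in> feas_set blk Xs nc h. surr blk f g Df Dg \<tau> x y \<le> surr blk f g Df Dg \<tau> z y))"

definition limit_point :: "(nat \<Rightarrow> 'a::topological_space) \<Rightarrow> 'a \<Rightarrow> bool" where
  "limit_point x l \<longleftrightarrow> (\<exists>r. strict_mono r \<and> (x \<circ> r) \<longlonglongrightarrow> l)"

end

theory Submission
  imports Defs
begin

text \<open>The surrogate
  \<open>S(\<cdot>; y)\<close> is convex plus a proximal term \<open>prox\<close>, so it has a unique minimizer over
  \<open>\<Xi>\<close>, and comparing it with the midpoint of \<open>x_hat y\<close> and \<open>y\<close> gives
  \<open>S(x_hat y; y) \<le> \<theta> y - prox/2\<close>. Convexity of the \<open>g\<^sub>i\<close> and the Lipschitz gradients of
  the \<open>f\<^sub>i\<close> show that \<open>S(\<cdot>; y)\<close> majorizes \<open>\<theta>\<close> up to \<open>(\<Sum>\<^sub>i L\<^sub>i) \<parallel>x - y\<parallel>\<^sup>2 - prox\<close>, so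
  each step decreases \<open>\<theta>\<close> by at least \<open>(3 \<tau>min / 4 - \<Sum>\<^sub>i L\<^sub>i) \<parallel>x (\<nu> + 1) - x \<nu>\<parallel>\<^sup>2\<close>,
  a positive multiple. Hence the iterates stay in the compact level set, limit points
  exist and successive steps tend to zero. Passing to the limit in the optimality of
  \<open>x (\<nu> + 1)\<close>, a limit point \<open>l\<close> minimizes \<open>S(\<cdot>; l)\<close> along segments in \<open>\<Xi>\<close>; since the
  derivative of \<open>S(\<cdot>; l)\<close> at \<open>l\<close> is \<open>\<nabla>\<theta>(l)\<close>, \<open>l\<close> is stationary.\<close>

lemma block_proj_add: "block_proj blk i (a + b) = block_proj blk i a + block_proj blk i b"
  by (simp add: block_proj_def vec_eq_iff)

lemma block_proj_diff: "block_proj blk i (a - b) = block_proj blk i a - block_proj blk i b"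
  by (simp add: block_proj_def vec_eq_iff)

lemma block_proj_scaleR: "block_proj blk i (c *\<^sub>R a) = c *\<^sub>R block_proj blk i a"
  by (simp add: block_proj_def vec_eq_iff)

lemma block_proj_zero [simp]: "block_proj blk i 0 = 0"
  by (simp add: block_proj_def vec_eq_iff)

lemma bounded_linear_block_proj: "bounded_linear (block_proj blk i)"
  by (intro linear_conv_bounded_linear[THEN iffD1] linearI block_proj_add block_proj_scaleR)

lemma sum_block_proj: "(\<Sum>i\<in>UNIV. block_proj blk i v) = v"
  for blk :: "'n::finite \<Rightarrow> 'i::finite"
  by (simp add: block_proj_def vec_eq_iff)

lemma block_repl_eq: "block_repl blk i x y = y + block_proj blk i (x - y)"
  by (simp add: block_proj_def block_repl_def vec_eq_iff)

lemma block_proj_block_repl: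
  "block_proj blk j (block_repl blk i x y) = (if j = i then block_proj blk j x else block_proj blk j y)"
  by (auto simp: block_proj_def block_repl_def vec_eq_iff)

lemma norm_block_proj_le: "norm (block_proj blk i v) \<le> norm v"
  by (rule norm_le_componentwise_cart) (simp add: block_proj_def)

lemma power2_norm_eq_sum_block_proj:
  "(norm v)\<^sup>2 = (\<Sum>i\<in>UNIV. (norm (block_proj blk i v))\<^sup>2)"
  for blk :: "'n::finite \<Rightarrow> 'i::finite"
proof -
  have sq: "(norm w)\<^sup>2 = (\<Sum>k\<in>UNIV. (w $ k)\<^sup>2)" for w :: "real^'n"
    by (simp only: power2_norm_eq_inner inner_vec_def) (simp add: power2_eq_square)
  have "(\<Sum>i\<in>UNIV. (norm (block_proj blk i v))\<^sup>2)
      = (\<Sum>i\<in>UNIV. \<Sum>k\<in>UNIV. if blk k = i then (v $ k)\<^sup>2 else 0)"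
    unfolding sq block_proj_def by (auto intro!: sum.cong)
  also have "\<dots> = (\<Sum>k\<in>UNIV. \<Sum>i\<in>UNIV. if blk k = i then (v $ k)\<^sup>2 else 0)"
    by (rule sum.swap)
  also have "\<dots> = (norm v)\<^sup>2"
    by (simp add: sq)
  finally show ?thesis ..
qed

lemma sum_inner_block_proj:
  "(\<Sum>i\<in>UNIV. \<Sum>j\<in>UNIV. D j \<bullet> block_proj blk i v) = (\<Sum>j\<in>UNIV. D j) \<bullet> v"
  for blk :: "'n::finite \<Rightarrow> 'i::finite"
  by (subst sum.swap) (simp add: inner_sum_right[symmetric] inner_sum_left sum_block_proj)

lemma sum_off_diagonal_inner_block_proj:
  "(\<Sum>i\<in>UNIV. \<Sum>j\<in>UNIV - {i}. D j \<bullet> block_proj blk i v)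
     = (\<Sum>j\<in>UNIV. D j) \<bullet> v - (\<Sum>i\<in>UNIV. D i \<bullet> block_proj blk i v)"
  for blk :: "'n::finite \<Rightarrow> 'i::finite"
  by (simp add: sum_diff1 sum_subtractf sum_inner_block_proj)

lemma power2_norm_midpoint:
  "(norm ((1/2) *\<^sub>R (a + b) :: 'a::real_inner))\<^sup>2
     = ((norm a)\<^sup>2 + (norm b)\<^sup>2) / 2 - (norm (a - b))\<^sup>2 / 4"
  by (simp add: power2_norm_eq_inner inner_add_left inner_add_right inner_diff_left
      inner_diff_right inner_commute algebra_simps) (simp add: field_simps)

lemma has_field_derivative_along_line:
  assumes "(\<phi> has_derivative (\<lambda>v. D \<bullet> v)) (at p)"
  shows "((\<lambda>t. \<phi> (p + t *\<^sub>R w)) has_field_derivative D \<bullet> w) (at 0)"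
proof -
  have line: "((\<lambda>t. p + t *\<^sub>R w) has_derivative (\<lambda>t. t *\<^sub>R w)) (at 0)"
    by (auto intro!: derivative_eq_intros)
  have "((\<lambda>t. \<phi> (p + t *\<^sub>R w)) has_derivative (\<lambda>t. D \<bullet> (t *\<^sub>R w))) (at 0)"
    using has_derivative_compose[OF line, of \<phi> "\<lambda>v. D \<bullet> v"] assms by simp
  then show ?thesis
    by (rule has_derivative_imp_has_field_derivative) simp
qed

lemma DERIV_nonpos_if_right_le:
  fixes \<psi> :: "real \<Rightarrow> real"
  assumes "DERIV \<psi> 0 :> D" and "\<And>t. 0 < t \<Longrightarrow> t < 1 \<Longrightarrow> \<psi> t \<le> \<psi> 0"
  shows "D \<le> 0"
proof (rule ccontr)
  assume "\<not> D \<le> 0"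
  then obtain d where "d > 0" and inc: "\<And>t. 0 < t \<Longrightarrow> t < d \<Longrightarrow> \<psi> 0 < \<psi> (0 + t)"
    using DERIV_pos_inc_right[OF assms(1)] by force
  define t where "t = min d 1 / 2"
  have "0 < t" "t < d" "t < 1"
    unfolding t_def using \<open>d > 0\<close> by auto
  then show False
    using inc[of t] assms(2)[of t] by simp
qed

lemma DERIV_nonneg_if_right_ge:
  fixes \<psi> :: "real \<Rightarrow> real"
  assumes "DERIV \<psi> 0 :> D" and "\<And>t. 0 < t \<Longrightarrow> t < 1 \<Longrightarrow> \<psi> 0 \<le> \<psi> t"
  shows "D \<ge> 0"
proof -
  have "- D \<le> 0"
    by (rule DERIV_nonpos_if_right_le[OF DERIV_minus[OF assms(1)]]) (use assms(2) in simp)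
  then show ?thesis
    by simp
qed

lemma convex_on_gradient_inequality:
  assumes "convex_on S \<phi>" and "(\<phi> has_derivative (\<lambda>v. D \<bullet> v)) (at y)"
    and "y \<in> S" and "z \<in> S"
  shows "\<phi> y + D \<bullet> (z - y) \<le> \<phi> z"
proof -
  let ?\<psi> = "\<lambda>t. \<phi> (y + t *\<^sub>R (z - y)) - t * (\<phi> z - \<phi> y)"
  have "D \<bullet> (z - y) - (\<phi> z - \<phi> y) \<le> 0"
  proof (rule DERIV_nonpos_if_right_le)
    show "DERIV ?\<psi> 0 :> D \<bullet> (z - y) - (\<phi> z - \<phi> y)"
      using DERIV_diff[OF has_field_derivative_along_line[OF assms(2)]
          DERIV_cmult_right[OF DERIV_ident]] by simp
    fix t :: real
    assume "0 < t" "t < 1"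
    then have "\<phi> ((1 - t) *\<^sub>R y + t *\<^sub>R z) \<le> (1 - t) * \<phi> y + t * \<phi> z"
      using convex_onD[OF assms(1)] assms(3,4) by simp
    moreover have "(1 - t) *\<^sub>R y + t *\<^sub>R z = y + t *\<^sub>R (z - y)"
      by (simp add: algebra_simps)
    ultimately show "?\<psi> t \<le> ?\<psi> 0"
      by (simp add: algebra_simps)
  qed
  then show ?thesis
    by simp
qed

text \<open>Mean-value bound on the triangle spanned by \<open>y\<close>, \<open>w\<close>, \<open>z\<close>, where
  \<open>\<parallel>Df p - Df y\<parallel> \<le> L r\<close> by convexity of the distance to \<open>y\<close>.\<close>
lemma lipschitz_gradient_linearization:
  fixes f :: "'a::real_inner \<Rightarrow> real"
  assumes S: "convex S" "y \<in> S" "w \<in> S" "z \<in> S"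
    and der: "\<And>p. p \<in> S \<Longrightarrow> (f has_derivative (\<lambda>v. Df p \<bullet> v)) (at p)"
    and lip: "\<And>p. p \<in> S \<Longrightarrow> norm (Df p - Df y) \<le> L * norm (p - y)"
    and L: "L \<ge> 0" and r: "norm (w - y) \<le> r" "norm (z - y) \<le> r"
  shows "f z - f w - Df y \<bullet> (z - w) \<le> L * r * norm (z - w)"
proof -
  have r0: "0 \<le> r"
    using order_trans[OF norm_ge_zero r(1)] .
  define T where "T = convex hull {y, w, z}"
  have T: "convex T" "y \<in> T" "w \<in> T" "z \<in> T"
    unfolding T_def by (auto intro: hull_inc)
  have TS: "T \<subseteq> S"
    unfolding T_def using S by (intro hull_minimal) auto
  have "\<forall>p\<in>{y, w, z}. dist y p \<le> r"
    using r r0 by (auto simp: dist_norm norm_minus_commute)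
  then have near: "dist y p \<le> r" if "p \<in> T" for p
    using convex_on_convex_hull_bound[OF convex_on_dist[OF convex_convex_hull]] that
    unfolding T_def by blast
  have "norm (f z - f w - Df y \<bullet> (z - w)) \<le> norm (z - w) * (L * r)"
  proof (rule differentiable_bound_linearization[where S = T and f' = "\<lambda>p v. Df p \<bullet> v"])
    show "w + t *\<^sub>R (z - w) \<in> T" if "t \<in> {0..1}" for t
      using convexD[OF T(1) T(3,4), of "1 - t" t] that by (simp add: algebra_simps)
    show "(f has_derivative (\<lambda>v. Df p \<bullet> v)) (at p within T)" if "p \<in> T" for p
      using der that TS by (blast intro: has_derivative_at_withinI)
    show "onorm ((\<lambda>v. Df p \<bullet> v) - (\<lambda>v. Df y \<bullet> v)) \<le> L * r" if "p \<in> T" for p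
      unfolding fun_diff_def
    proof (rule onorm_bound)
      show "0 \<le> L * r"
        using L r0 by simp
      have "norm (Df p - Df y) \<le> L * r"
        using lip[of p] mult_left_mono[OF near[OF that] L] that TS
        by (auto simp: dist_norm norm_minus_commute)
      fix v
      have "norm (Df p \<bullet> v - Df y \<bullet> v) \<le> norm (Df p - Df y) * norm v"
        using Cauchy_Schwarz_ineq2[of "Df p - Df y" v] by (simp add: inner_diff_left)
      also have "\<dots> \<le> L * r * norm v"
        by (rule mult_right_mono) (fact, simp)
      finally show "norm (Df p \<bullet> v - Df y \<bullet> v) \<le> L * r * norm v" .
    qed
  qed (use T in auto)
  then show ?thesis
    by (simp add: mult.commute)
qed

lemma coercive_attains_inf:
  fixes \<phi> :: "'a::heine_borel \<Rightarrow> real"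
  assumes "closed K" "y \<in> K" "continuous_on K \<phi>"
    and far: "\<And>z. z \<in> K \<Longrightarrow> R < dist y z \<Longrightarrow> \<phi> y \<le> \<phi> z"
  shows "\<exists>x\<in>K. \<forall>z\<in>K. \<phi> x \<le> \<phi> z"
proof -
  define B where "B = K \<inter> cball y \<bar>R\<bar>"
  have "compact B"
    unfolding B_def using assms(1) by (intro closed_Int_compact compact_cball)
  moreover have yB: "y \<in> B"
    unfolding B_def using assms(2) by simp
  moreover have "continuous_on B \<phi>"
    using assms(3) unfolding B_def by (rule continuous_on_subset) simp
  ultimately have "\<exists>x\<in>B. \<forall>z\<in>B. \<phi> x \<le> \<phi> z"
    by (intro continuous_attains_inf) auto
  then obtain x where x: "x \<in> B" and min: "\<And>z. z \<in> B \<Longrightarrow> \<phi> x \<le> \<phi> z"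
    by blast
  have "\<phi> x \<le> \<phi> z" if z: "z \<in> K" for z
  proof (cases "z \<in> B")
    case False
    then have "R < dist y z"
      using z unfolding B_def by simp
    then show ?thesis
      using min[OF yB] far[OF z] by simp
  qed (rule min)
  then show ?thesis
    using x unfolding B_def by blast
qed

lemma sufficient_decrease_imp_decseq:
  assumes "c \<ge> 0" and "\<And>n. \<theta> (x (Suc n)) \<le> \<theta> (x n) - c * (norm (x (Suc n) - x n))\<^sup>2"
  shows "decseq (\<lambda>n. \<theta> (x n) :: real)"
proof (rule decseq_SucI)
  show "\<theta> (x (Suc n)) \<le> \<theta> (x n)" for n
    using assms(2)[of n] mult_nonneg_nonneg[OF assms(1) zero_le_power2[of "norm (x (Suc n) - x n)"]]
    by linarith
qed

lemma sufficient_decrease_imp_steps_tendsto_0: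
  fixes x :: "nat \<Rightarrow> 'a::real_normed_vector" and \<theta> :: "'a \<Rightarrow> real"
  assumes c: "c > 0"
    and decr: "\<And>n. \<theta> (x (Suc n)) \<le> \<theta> (x n) - c * (norm (x (Suc n) - x n))\<^sup>2"
    and bdd: "\<And>n. m \<le> \<theta> (x n)"
  shows "(\<lambda>n. x (Suc n) - x n) \<longlonglongrightarrow> 0"
proof -
  have "decseq (\<lambda>n. \<theta> (x n))"
    using sufficient_decrease_imp_decseq[where \<theta> = \<theta> and x = x, OF less_imp_le[OF c] decr] .
  moreover have "\<forall>n. m \<le> \<theta> (x n)"
    using bdd by simp
  ultimately obtain t where lim: "(\<lambda>n. \<theta> (x n)) \<longlonglongrightarrow> t"
    by (rule decseq_convergent)
  have gap: "(\<lambda>n. (\<theta> (x n) - \<theta> (x (Suc n))) / c) \<longlonglongrightarrow> 0"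
    using tendsto_divide[OF tendsto_diff[OF lim LIMSEQ_Suc[OF lim]] tendsto_const[of c]] c by simp
  have "(\<lambda>n. (norm (x (Suc n) - x n))\<^sup>2) \<longlonglongrightarrow> 0"
  proof (rule tendsto_sandwich[OF _ _ tendsto_const gap])
    show "\<forall>\<^sub>F n in sequentially. (norm (x (Suc n) - x n))\<^sup>2 \<le> (\<theta> (x n) - \<theta> (x (Suc n))) / c"
    proof (intro always_eventually allI)
      fix n
      show "(norm (x (Suc n) - x n))\<^sup>2 \<le> (\<theta> (x n) - \<theta> (x (Suc n))) / c"
        using decr[of n] by (simp add: pos_le_divide_eq[OF c] algebra_simps)
    qed
  qed simp
  then have "(\<lambda>n. sqrt ((norm (x (Suc n) - x n))\<^sup>2)) \<longlonglongrightarrow> sqrt 0"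
    by (rule tendsto_real_sqrt)
  then show ?thesis
    by (simp add: tendsto_norm_zero_iff)
qed

locale dc_problem =
  fixes blk :: "'n::finite \<Rightarrow> 'i::finite"
    and Xs :: "'i \<Rightarrow> (real^'n) set"
    and f g :: "'i \<Rightarrow> real^'n \<Rightarrow> real"
    and Df Dg :: "'i \<Rightarrow> real^'n \<Rightarrow> real^'n"
    and nc :: nat
    and h :: "nat \<Rightarrow> real^'n \<Rightarrow> real"
    and Dh :: "nat \<Rightarrow> real^'n \<Rightarrow> real^'n"
    and L \<tau> :: "'i \<Rightarrow> real"
    and U :: "(real^'n) set"
  assumes Xs_closed: "\<And>i. closed (Xs i)" and Xs_convex: "\<And>i. convex (Xs i)"
    and X_subset_U: "prod_set blk Xs \<subseteq> U"
    and f_convex: "\<And>i. convex_on U (f i)" and g_convex: "\<And>i. convex_on U (g i)"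
    and f_deriv: "\<And>i z. z \<in> U \<Longrightarrow> (f i has_derivative (\<lambda>v. Df i z \<bullet> v)) (at z)"
    and g_deriv: "\<And>i z. z \<in> U \<Longrightarrow> (g i has_derivative (\<lambda>v. Dg i z \<bullet> v)) (at z)"
    and Df_cont: "\<And>i. continuous_on U (Df i)" and Dg_cont: "\<And>i. continuous_on U (Dg i)"
    and h_deriv: "\<And>j z. j < nc \<Longrightarrow> z \<in> U \<Longrightarrow> (h j has_derivative (\<lambda>v. Dh j z \<bullet> v)) (at z)"
    and h_convex: "\<And>j. j < nc \<Longrightarrow> convex_on U (h j)"
    and Df_lipschitz: "\<And>i u v. u \<in> prod_set blk Xs \<Longrightarrow> v \<in> prod_set blk Xs \<Longrightarrow>
       norm (Df i u - Df i v) \<le> L i * norm (u - v)"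
    and L_nonneg: "\<And>i. L i \<ge> 0"
    and tau_pos: "\<And>i. \<tau> i > 0"
begin

abbreviation "X \<equiv> prod_set blk Xs"
abbreviation "Xi \<equiv> feas_set blk Xs nc h"
abbreviation "\<theta> \<equiv> dc_obj f g"
abbreviation "S \<equiv> surr blk f g Df Dg \<tau>"
abbreviation "x_hat \<equiv> xhat blk Xs nc h f g Df Dg \<tau>"
abbreviation "bp \<equiv> block_proj blk"

subsection \<open>The feasible set\<close>

lemma mem_X_iff: "x \<in> X \<longleftrightarrow> (\<forall>i. bp i x \<in> Xs i)"
  by (simp add: prod_set_def)

lemma block_repl_mem_X: "x \<in> X \<Longrightarrow> y \<in> X \<Longrightarrow> block_repl blk i x y \<in> X"
  by (simp add: mem_X_iff block_proj_block_repl)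

lemma mem_U_if_mem_X: "x \<in> X \<Longrightarrow> x \<in> U"
  using X_subset_U by blast

lemma Xi_subset_X: "Xi \<subseteq> X"
  by (auto simp: feas_set_def)

lemma convex_X: "convex X"
  unfolding convex_def
proof (intro ballI allI impI)
  fix x y :: "real^'n" and u v :: real
  assume "x \<in> X" "y \<in> X" "0 \<le> u" "0 \<le> v" "u + v = 1"
  then show "u *\<^sub>R x + v *\<^sub>R y \<in> X"
    unfolding mem_X_iff block_proj_add block_proj_scaleR using convexD[OF Xs_convex] by blast
qed

lemma closed_X: "closed X"
proof -
  have "X = (\<Inter>i. bp i -` Xs i)"
    by (auto simp: mem_X_iff)
  moreover have "closed (bp i -` Xs i)" for i
    by (intro continuous_closed_vimage Xs_closed linear_continuous_at bounded_linear_block_proj)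
  ultimately show ?thesis
    by auto
qed

lemma convex_Xi: "convex Xi"
  unfolding convex_def
proof (intro ballI allI impI)
  fix x y :: "real^'n" and u v :: real
  assume x: "x \<in> Xi" and y: "y \<in> Xi" and uv: "0 \<le> u" "0 \<le> v" "u + v = 1"
  have "u *\<^sub>R x + v *\<^sub>R y \<in> X"
    using convexD[OF convex_X] x y uv Xi_subset_X by blast
  moreover have "h j (u *\<^sub>R x + v *\<^sub>R y) \<le> 0" if j: "j < nc" for j
  proof -
    have "h j (u *\<^sub>R x + v *\<^sub>R y) \<le> u * h j x + v * h j y"
      using h_convex[OF j] x y uv Xi_subset_X mem_U_if_mem_X unfolding convex_on_def by blast
    also have "\<dots> \<le> 0"
      using x y j uv by (auto simp: feas_set_def intro!: add_nonpos_nonpos mult_nonneg_nonpos)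
    finally show ?thesis .
  qed
  ultimately show "u *\<^sub>R x + v *\<^sub>R y \<in> Xi"
    by (simp add: feas_set_def)
qed

lemma continuous_on_h: "j < nc \<Longrightarrow> continuous_on U (h j)"
  using h_deriv has_derivative_continuous continuous_at_imp_continuous_on by blast

lemma closed_Xi: "closed Xi"
proof -
  have "Xi = X \<inter> (\<Inter>j\<in>{..<nc}. {x \<in> X. h j x \<le> 0})"
    by (auto simp: feas_set_def)
  moreover have "closed {x \<in> X. h j x \<le> 0}" if "j < nc" for j
    using continuous_on_closed_Collect_le[OF continuous_on_subset[OF continuous_on_h[OF that] X_subset_U]
        continuous_on_const closed_X] by simp
  then have "closed (\<Inter>j\<in>{..<nc}. {x \<in> X. h j x \<le> 0})"
    by (intro closed_INT) auto
  ultimately show ?thesis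
    using closed_X by auto
qed

subsection \<open>The surrogate\<close>

lemma continuous_on_f: "continuous_on U (f i)"
  using f_deriv has_derivative_continuous continuous_at_imp_continuous_on by blast

lemma continuous_on_g: "continuous_on U (g i)"
  using g_deriv has_derivative_continuous continuous_at_imp_continuous_on by blast

lemma surr_self: "S y y = \<theta> y"
  by (simp add: surr_def dc_obj_def block_repl_eq)

lemma surr_tendsto:
  assumes a: "(a \<longlongrightarrow> a0) F" and b: "(b \<longlongrightarrow> b0) F" and "a0 \<in> X" "b0 \<in> X"
    and ev: "\<forall>\<^sub>F x in F. a x \<in> X \<and> b x \<in> X"
  shows "((\<lambda>x. S (a x) (b x)) \<longlongrightarrow> S a0 b0) F"
proof -
  have ev_U: "\<forall>\<^sub>F x in F. block_repl blk i (a x) (b x) \<in> U \<and> b x \<in> U" for i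
    using ev by eventually_elim (simp add: block_repl_mem_X mem_U_if_mem_X)
  have U: "block_repl blk i a0 b0 \<in> U" "b0 \<in> U" for i
    using assms(3,4) by (simp_all add: block_repl_mem_X mem_U_if_mem_X)
  have repl: "((\<lambda>x. block_repl blk i (a x) (b x)) \<longlongrightarrow> block_repl blk i a0 b0) F" for i
    unfolding block_repl_eq
    by (intro tendsto_intros a b bounded_linear.tendsto[OF bounded_linear_block_proj])
  have "((\<lambda>x. f i (block_repl blk i (a x) (b x))) \<longlongrightarrow> f i (block_repl blk i a0 b0)) F"
    "((\<lambda>x. g i (b x)) \<longlongrightarrow> g i b0) F"
    "((\<lambda>x. Df i (b x)) \<longlongrightarrow> Df i b0) F" "((\<lambda>x. Dg i (b x)) \<longlongrightarrow> Dg i b0) F" for i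
    using ev_U[of i] U(1)[of i] U(2)
    by (auto intro!: continuous_on_tendsto_compose[OF continuous_on_f repl]
        continuous_on_tendsto_compose[OF continuous_on_g b] continuous_on_tendsto_compose[OF Df_cont b]
        continuous_on_tendsto_compose[OF Dg_cont b] elim: eventually_mono)
  then show ?thesis
    unfolding surr_def
    by (intro tendsto_intros a b bounded_linear.tendsto[OF bounded_linear_block_proj])
qed

lemma continuous_on_surr: "y \<in> X \<Longrightarrow> continuous_on X (\<lambda>x. S x y)"
  unfolding continuous_on_def
  by (auto intro!: surr_tendsto simp: eventually_at_filter)

definition surr_lin :: "real^'n \<Rightarrow> real^'n \<Rightarrow> real" where
  "surr_lin y v = (\<Sum>i\<in>UNIV. \<Sum>j\<in>UNIV - {i}. Df j y \<bullet> bp i v) - (\<Sum>j\<in>UNIV. Dg j y) \<bullet> v"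

definition prox :: "real^'n \<Rightarrow> real" where
  "prox v = (\<Sum>i\<in>UNIV. \<tau> i / 2 * (norm (bp i v))\<^sup>2)"

lemma surr_expand:
  "S x y = (\<Sum>i\<in>UNIV. f i (block_repl blk i x y)) - (\<Sum>i\<in>UNIV. g i y) + surr_lin y (x - y) + prox (x - y)"
  unfolding surr_def surr_lin_def prox_def
  by (simp add: sum.distrib sum_subtractf sum_inner_block_proj)

lemma surr_lin_midpoint: "surr_lin y ((1/2) *\<^sub>R (a + b)) = (surr_lin y a + surr_lin y b) / 2"
  unfolding surr_lin_def
  by (simp add: block_proj_add block_proj_scaleR inner_add_right sum.distrib
      sum_divide_distrib[symmetric] field_simps)

lemma surr_lin_scaleR: "surr_lin y (t *\<^sub>R v) = t * surr_lin y v"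
  unfolding surr_lin_def by (simp add: block_proj_scaleR sum_distrib_left right_diff_distrib)

lemma prox_scaleR: "prox (t *\<^sub>R v) = t\<^sup>2 * prox v"
  unfolding prox_def by (simp add: block_proj_scaleR sum_distrib_left power_mult_distrib mult_ac)

lemma prox_midpoint: "prox ((1/2) *\<^sub>R (a + b)) = (prox a + prox b) / 2 - prox (a - b) / 4"
proof -
  have "\<tau> i / 2 * (norm (bp i ((1/2) *\<^sub>R (a + b))))\<^sup>2
     = (\<tau> i / 2 * (norm (bp i a))\<^sup>2 + \<tau> i / 2 * (norm (bp i b))\<^sup>2) / 2 - \<tau> i / 2 * (norm (bp i (a - b)))\<^sup>2 / 4" for i
    unfolding block_proj_scaleR block_proj_add block_proj_diff power2_norm_midpoint
    by (simp add: field_simps)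
  then show ?thesis
    unfolding prox_def by (simp add: sum.distrib sum_subtractf sum_divide_distrib[symmetric])
qed

definition tmin :: real where
  "tmin = Min (range \<tau>)"

lemma tmin_le: "tmin \<le> \<tau> i"
  unfolding tmin_def by (rule Min_le) auto

lemma tmin_pos: "tmin > 0"
proof -
  have "tmin \<in> range \<tau>"
    unfolding tmin_def by (rule Min_in) auto
  then show ?thesis
    using tau_pos by auto
qed

lemma prox_ge: "tmin / 2 * (norm v)\<^sup>2 \<le> prox v"
proof -
  have "tmin / 2 * (norm v)\<^sup>2 = (\<Sum>i\<in>UNIV. tmin / 2 * (norm (bp i v))\<^sup>2)"
    by (simp add: power2_norm_eq_sum_block_proj[of v blk] sum_distrib_left)
  also have "\<dots> \<le> prox v"
    unfolding prox_def by (intro sum_mono mult_right_mono divide_right_mono tmin_le) auto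
  finally show ?thesis .
qed

lemma surr_midpoint_le:
  assumes "x1 \<in> X" "x2 \<in> X" "y \<in> X"
  shows "S ((1/2) *\<^sub>R (x1 + x2)) y \<le> (S x1 y + S x2 y) / 2 - prox (x1 - x2) / 4"
proof -
  have repl: "block_repl blk i ((1/2) *\<^sub>R (x1 + x2)) y
      = (1 - 1/2) *\<^sub>R block_repl blk i x1 y + (1/2) *\<^sub>R block_repl blk i x2 y" for i
    by (simp add: block_repl_def vec_eq_iff field_simps)
  have mid_i: "f i (block_repl blk i ((1/2) *\<^sub>R (x1 + x2)) y)
      \<le> (f i (block_repl blk i x1 y) + f i (block_repl blk i x2 y)) / 2" for i
  proof -
    have "f i ((1 - 1/2) *\<^sub>R block_repl blk i x1 y + (1/2) *\<^sub>R block_repl blk i x2 y)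
        \<le> (1 - 1/2) * f i (block_repl blk i x1 y) + 1/2 * f i (block_repl blk i x2 y)"
      using assms by (intro convex_onD[OF f_convex]) (simp_all add: block_repl_mem_X mem_U_if_mem_X)
    then show ?thesis
      unfolding repl by simp
  qed
  have F: "(\<Sum>i\<in>UNIV. f i (block_repl blk i ((1/2) *\<^sub>R (x1 + x2)) y))
      \<le> ((\<Sum>i\<in>UNIV. f i (block_repl blk i x1 y)) + (\<Sum>i\<in>UNIV. f i (block_repl blk i x2 y))) / 2"
    using sum_mono[of UNIV, OF mid_i] by (simp add: sum.distrib sum_divide_distrib[symmetric])
  have mid: "(1/2) *\<^sub>R (x1 + x2) - y = (1/2) *\<^sub>R ((x1 - y) + (x2 - y))"
    by (simp add: vec_eq_iff field_simps)
  show ?thesis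
    using F surr_lin_midpoint[of y "x1 - y" "x2 - y"] prox_midpoint[of "x1 - y" "x2 - y"]
    unfolding surr_expand[of "(1/2) *\<^sub>R (x1 + x2)" y] surr_expand[of x1 y] surr_expand[of x2 y] mid
    by (simp add: field_simps)
qed

lemma dc_obj_eq: "\<theta> y = (\<Sum>i\<in>UNIV. f i y) - (\<Sum>i\<in>UNIV. g i y)"
  by (simp add: dc_obj_def sum_subtractf)

lemma surr_ge_linearization:
  assumes y: "y \<in> X" and z: "z \<in> X"
  shows "\<theta> y + (\<Sum>i\<in>UNIV. Df i y - Dg i y) \<bullet> (z - y) + prox (z - y) \<le> S z y"
proof -
  have "f i y + Df i y \<bullet> (block_repl blk i z y - y) \<le> f i (block_repl blk i z y)" for i
    by (rule convex_on_gradient_inequality[OF f_convex f_deriv])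
      (use y z in \<open>simp_all add: block_repl_mem_X mem_U_if_mem_X\<close>)
  then have f_i: "f i y + Df i y \<bullet> bp i (z - y) \<le> f i (block_repl blk i z y)" for i
    by (simp add: block_repl_eq)
  have "(\<Sum>i\<in>UNIV. f i y) + (\<Sum>i\<in>UNIV. Df i y \<bullet> bp i (z - y)) \<le> (\<Sum>i\<in>UNIV. f i (block_repl blk i z y))"
    using sum_mono[of UNIV, OF f_i] by (simp add: sum.distrib)
  then show ?thesis
    unfolding surr_expand[of z y] dc_obj_eq surr_lin_def sum_off_diagonal_inner_block_proj
    by (simp add: sum_subtractf inner_diff_left)
qed

subsection \<open>The best-response map\<close>

lemma surr_center_le_if_far:
  assumes y: "y \<in> X" and z: "z \<in> X"
    and far: "2 * norm (\<Sum>i\<in>UNIV. Df i y - Dg i y) / tmin < dist y z"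
  shows "S y y \<le> S z y"
proof -
  define G where "G = (\<Sum>i\<in>UNIV. Df i y - Dg i y)"
  have "norm G * norm (z - y) \<le> tmin / 2 * norm (z - y) * norm (z - y)"
    using far tmin_pos unfolding G_def
    by (intro mult_right_mono) (simp_all add: dist_norm norm_minus_commute field_simps)
  moreover have "- (norm G * norm (z - y)) \<le> G \<bullet> (z - y)"
    using norm_cauchy_schwarz[of "- G" "z - y"] by simp
  moreover have "\<theta> y + G \<bullet> (z - y) + tmin / 2 * (norm (z - y))\<^sup>2 \<le> S z y"
    using surr_ge_linearization[OF y z] prox_ge[of "z - y"] unfolding G_def by simp
  ultimately show ?thesis
    by (simp add: surr_self power2_eq_square)
qed

lemma surr_has_minimizer:
  assumes "y \<in> Xi"
  shows "\<exists>x\<in>Xi. \<forall>z\<in>Xi. S x y \<le> S z y"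
proof (rule coercive_attains_inf[OF closed_Xi assms])
  show "continuous_on Xi (\<lambda>x. S x y)"
    using continuous_on_surr Xi_subset_X assms by (blast intro: continuous_on_subset)
  show "S y y \<le> S z y" if "z \<in> Xi" and "2 * norm (\<Sum>i\<in>UNIV. Df i y - Dg i y) / tmin < dist y z" for z
    using surr_center_le_if_far that assms Xi_subset_X by blast
qed

lemma surr_minimizer_unique:
  assumes y: "y \<in> X"
    and x1: "x1 \<in> Xi" "\<forall>z\<in>Xi. S x1 y \<le> S z y"
    and x2: "x2 \<in> Xi" "\<forall>z\<in>Xi. S x2 y \<le> S z y"
  shows "x1 = x2"
proof (rule ccontr)
  assume "x1 \<noteq> x2"
  then have "0 < tmin / 2 * (norm (x1 - x2))\<^sup>2"
    using tmin_pos by simp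
  then have pos: "0 < prox (x1 - x2)"
    using prox_ge[of "x1 - x2"] by linarith
  have "(1/2) *\<^sub>R (x1 + x2) \<in> Xi"
    using convexD[OF convex_Xi x1(1) x2(1), of "1/2" "1/2"] by (simp add: scaleR_add_right)
  then have "S x1 y \<le> S ((1/2) *\<^sub>R (x1 + x2)) y"
    using x1(2) by blast
  also have "\<dots> \<le> (S x1 y + S x2 y) / 2 - prox (x1 - x2) / 4"
    using surr_midpoint_le x1(1) x2(1) y Xi_subset_X by blast
  moreover have "S x2 y \<le> S x1 y"
    using x1(1) x2(2) by blast
  ultimately show False
    using pos by argo
qed

lemma x_hat_minimizes:
  assumes "y \<in> Xi"
  shows "x_hat y \<in> Xi" and "\<And>z. z \<in> Xi \<Longrightarrow> S (x_hat y) y \<le> S z y"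
proof -
  let ?P = "\<lambda>x. x \<in> Xi \<and> (\<forall>z\<in>Xi. S x y \<le> S z y)"
  obtain x where "?P x"
    using surr_has_minimizer[OF assms] by blast
  moreover have "x' = x" if "?P x'" for x'
    using surr_minimizer_unique[of y x' x] \<open>?P x\<close> that assms Xi_subset_X by blast
  ultimately have "?P (THE x. ?P x)"
    by (rule theI)
  then show "x_hat y \<in> Xi" and "\<And>z. z \<in> Xi \<Longrightarrow> S (x_hat y) y \<le> S z y"
    unfolding xhat_def by auto
qed

subsection \<open>Sufficient decrease\<close>

lemma f_le_block_linearization:
  assumes z: "z \<in> X" and y: "y \<in> X"
  shows "f i z \<le> f i (block_repl blk i z y) + Df i y \<bullet> (z - block_repl blk i z y) + L i * (norm (z - y))\<^sup>2"
proof -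
  let ?w = "block_repl blk i z y"
  have zw: "norm (z - ?w) \<le> norm (z - y)"
    by (rule norm_le_componentwise_cart) (simp add: block_repl_def)
  have "f i z - f i ?w - Df i y \<bullet> (z - ?w) \<le> L i * norm (z - y) * norm (z - ?w)"
  proof (rule lipschitz_gradient_linearization[OF convex_X y block_repl_mem_X[OF z y] z])
    show "(f i has_derivative (\<lambda>v. Df i p \<bullet> v)) (at p)" if "p \<in> X" for p
      using f_deriv mem_U_if_mem_X that by blast
    show "norm (?w - y) \<le> norm (z - y)"
      by (simp add: block_repl_eq norm_block_proj_le)
  qed (use Df_lipschitz y L_nonneg in auto)
  also have "\<dots> \<le> L i * (norm (z - y))\<^sup>2"
    using mult_left_mono[OF zw, of "L i * norm (z - y)"] L_nonneg[of i]
    by (simp add: power2_eq_square mult.assoc)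
  finally show ?thesis
    by simp
qed

text \<open>The term \<open>\<Sum>\<^sub>i L\<^sub>i\<close> pays for freezing \<open>y\<^sub>-\<^sub>i\<close> inside \<open>f\<^sub>i\<close>.\<close>

lemma dc_obj_le_surr:
  assumes z: "z \<in> X" and y: "y \<in> X"
  shows "\<theta> z \<le> S z y - prox (z - y) + (\<Sum>i\<in>UNIV. L i) * (norm (z - y))\<^sup>2"
proof -
  have g_i: "g i y + Dg i y \<bullet> (z - y) \<le> g i z" for i
    using convex_on_gradient_inequality[OF g_convex g_deriv] y z by (simp add: mem_U_if_mem_X)
  have G: "(\<Sum>i\<in>UNIV. g i y) + (\<Sum>i\<in>UNIV. Dg i y) \<bullet> (z - y) \<le> (\<Sum>i\<in>UNIV. g i z)"
    using sum_mono[of UNIV, OF g_i] by (simp add: sum.distrib inner_sum_left)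
  have F: "(\<Sum>i\<in>UNIV. f i z) \<le> (\<Sum>i\<in>UNIV. f i (block_repl blk i z y))
      + (\<Sum>i\<in>UNIV. Df i y \<bullet> (z - block_repl blk i z y)) + (\<Sum>i\<in>UNIV. L i) * (norm (z - y))\<^sup>2"
    using sum_mono[of UNIV, OF f_le_block_linearization[OF z y]]
    by (simp add: sum.distrib sum_distrib_right)
  have "(\<Sum>i\<in>UNIV. Df i y \<bullet> (z - block_repl blk i z y))
      = (\<Sum>i\<in>UNIV. Df i y) \<bullet> (z - y) - (\<Sum>i\<in>UNIV. Df i y \<bullet> bp i (z - y))"
  proof -
    have "z - block_repl blk i z y = (z - y) - bp i (z - y)" for i
      by (simp add: block_repl_eq)
    then have "(\<Sum>i\<in>UNIV. Df i y \<bullet> (z - block_repl blk i z y))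
        = (\<Sum>i\<in>UNIV. Df i y \<bullet> (z - y) - Df i y \<bullet> bp i (z - y))"
      by (simp only: inner_diff_right)
    then show ?thesis
      by (simp only: sum_subtractf inner_sum_left)
  qed
  then have "surr_lin y (z - y)
      = (\<Sum>i\<in>UNIV. Df i y \<bullet> (z - block_repl blk i z y)) - (\<Sum>i\<in>UNIV. Dg i y) \<bullet> (z - y)"
    unfolding surr_lin_def sum_off_diagonal_inner_block_proj by simp
  then show ?thesis
    unfolding dc_obj_eq surr_expand[of z y] using F G by linarith
qed

lemma sufficient_decrease:
  assumes y: "y \<in> Xi"
  shows "\<theta> (x_hat y) \<le> \<theta> y - (3 * tmin / 4 - (\<Sum>i\<in>UNIV. L i)) * (norm (x_hat y - y))\<^sup>2"
proof -
  let ?x = "x_hat y"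
  have x: "?x \<in> Xi" "?x \<in> X" and yX: "y \<in> X"
    using x_hat_minimizes(1)[OF y] y Xi_subset_X by auto
  have "(1/2) *\<^sub>R (?x + y) \<in> Xi"
    using convexD[OF convex_Xi x(1) y, of "1/2" "1/2"] by (simp add: scaleR_add_right)
  then have "S ?x y \<le> S ((1/2) *\<^sub>R (?x + y)) y"
    by (rule x_hat_minimizes(2)[OF y])
  also have "\<dots> \<le> (S ?x y + \<theta> y) / 2 - prox (?x - y) / 4"
    using surr_midpoint_le[OF x(2) yX yX] by (simp add: surr_self)
  finally have "S ?x y \<le> \<theta> y - prox (?x - y) / 2"
    by (simp add: field_simps)
  then show ?thesis
    using dc_obj_le_surr[OF x(2) yX] prox_ge[of "?x - y"] by (simp add: field_simps)
qed

subsection \<open>Stationarity\<close>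

lemma surr_line_deriv:
  assumes l: "l \<in> X"
  shows "((\<lambda>t. S (l + t *\<^sub>R d) l) has_field_derivative (\<Sum>i\<in>UNIV. Df i l - Dg i l) \<bullet> d) (at 0)"
proof -
  have S_line: "S (l + t *\<^sub>R d) l = (\<Sum>i\<in>UNIV. f i (l + t *\<^sub>R bp i d)) - (\<Sum>i\<in>UNIV. g i l)
      + t * surr_lin l d + t\<^sup>2 * prox d" for t
    by (simp add: surr_expand block_repl_eq block_proj_scaleR surr_lin_scaleR prox_scaleR)
  have "((\<lambda>t. \<Sum>i\<in>UNIV. f i (l + t *\<^sub>R bp i d)) has_field_derivative (\<Sum>i\<in>UNIV. Df i l \<bullet> bp i d)) (at 0)"
    by (intro DERIV_sum has_field_derivative_along_line f_deriv mem_U_if_mem_X l)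
  then have "((\<lambda>t. S (l + t *\<^sub>R d) l) has_field_derivative
      (\<Sum>i\<in>UNIV. Df i l \<bullet> bp i d) - 0 + 1 * surr_lin l d + 2 * 0 ^ 1 * prox d) (at 0)"
    unfolding S_line
    by (intro DERIV_add DERIV_diff DERIV_const DERIV_cmult_right DERIV_ident)
      (auto intro: derivative_eq_intros)
  then show ?thesis
    by (simp add: surr_lin_def sum_off_diagonal_inner_block_proj sum_subtractf inner_diff_left)
qed

lemma stationary_if_surr_min_on_segments:
  assumes l: "l \<in> Xi"
    and min: "\<And>z t. z \<in> Xi \<Longrightarrow> 0 < t \<Longrightarrow> t < 1 \<Longrightarrow> S l l \<le> S (l + t *\<^sub>R (z - l)) l"
  shows "dc_stationary blk Xs nc h Df Dg l"
  unfolding dc_stationary_def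
proof (intro conjI ballI)
  fix z
  assume z: "z \<in> Xi"
  show "0 \<le> (\<Sum>i\<in>UNIV. Df i l - Dg i l) \<bullet> (z - l)"
    by (rule DERIV_nonneg_if_right_ge[OF surr_line_deriv]) (use l Xi_subset_X min[OF z] in auto)
qed (rule l)

subsection \<open>Limit points of the iteration\<close>

lemma limit_point_stationary:
  assumes x_Xi: "\<And>n. x n \<in> Xi" and iter: "\<And>n. x (Suc n) = x_hat (x n)"
    and steps: "(\<lambda>n. x (Suc n) - x n) \<longlonglongrightarrow> 0" and lp: "limit_point x l"
  shows "dc_stationary blk Xs nc h Df Dg l"
proof -
  obtain r where r: "strict_mono r" and xr: "(\<lambda>k. x (r k)) \<longlonglongrightarrow> l"
    using lp unfolding limit_point_def o_def by blast
  have l: "l \<in> Xi"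
    using closed_sequentially[OF closed_Xi _ xr] x_Xi by blast
  have "(\<lambda>k. x (r k) + (x (Suc (r k)) - x (r k))) \<longlonglongrightarrow> l + 0"
    using tendsto_add[OF xr LIMSEQ_subseq_LIMSEQ[OF steps r]] by (simp add: o_def)
  then have xr': "(\<lambda>k. x (Suc (r k))) \<longlonglongrightarrow> l"
    by simp
  show ?thesis
  proof (rule stationary_if_surr_min_on_segments[OF l])
    fix z and t :: real
    assume z: "z \<in> Xi" and t: "0 < t" "t < 1"
    have seg: "a + t *\<^sub>R (z - a) \<in> Xi" if "a \<in> Xi" for a
      using convexD[OF convex_Xi that z, of "1 - t" t] t by (simp add: algebra_simps)
    have X: "x n \<in> X" "x n + t *\<^sub>R (z - x n) \<in> X" "l \<in> X" "l + t *\<^sub>R (z - l) \<in> X" for n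
      using x_Xi seg l Xi_subset_X by blast+
    have lim_x: "(\<lambda>k. S (x (Suc (r k))) (x (r k))) \<longlonglongrightarrow> S l l"
      by (rule surr_tendsto[OF xr' xr]) (use X in auto)
    have lim_seg: "(\<lambda>k. S (x (Suc (r k)) + t *\<^sub>R (z - x (Suc (r k)))) (x (r k)))
        \<longlonglongrightarrow> S (l + t *\<^sub>R (z - l)) l"
      by (rule surr_tendsto[OF tendsto_add[OF xr' tendsto_scaleR[OF tendsto_const
              tendsto_diff[OF tendsto_const xr']]] xr]) (use X in auto)
    have "S (x (Suc (r k))) (x (r k)) \<le> S (x (Suc (r k)) + t *\<^sub>R (z - x (Suc (r k)))) (x (r k))" for k
      unfolding iter by (intro x_hat_minimizes(2) x_Xi seg x_hat_minimizes(1))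
    then show "S l l \<le> S (l + t *\<^sub>R (z - l)) l"
      by (intro LIMSEQ_le[OF lim_x lim_seg]) auto
  qed
qed

theorem best_response_limit_points_stationary:
  assumes tau: "tmin > 2 * (\<Sum>i\<in>UNIV. L i)"
    and x0: "x 0 \<in> Xi"
    and level_compact: "compact {z \<in> Xi. \<theta> z \<le> \<theta> (x 0)}"
    and iter: "\<And>n. x (Suc n) = x_hat (x n)"
  shows "(\<exists>l. limit_point x l) \<and> (\<forall>l. limit_point x l \<longrightarrow> dc_stationary blk Xs nc h Df Dg l)"
proof -
  define c where "c = 3 * tmin / 4 - (\<Sum>i\<in>UNIV. L i)"
  have c: "c > 0"
    using tau sum_nonneg[of UNIV L] L_nonneg unfolding c_def by force
  have x_Xi: "x n \<in> Xi" for n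
    by (induction n) (simp_all add: x0 iter x_hat_minimizes(1))
  have decr: "\<theta> (x (Suc n)) \<le> \<theta> (x n) - c * (norm (x (Suc n) - x n))\<^sup>2" for n
    unfolding iter c_def by (rule sufficient_decrease[OF x_Xi])
  have "decseq (\<lambda>n. \<theta> (x n))"
    using sufficient_decrease_imp_decseq[where \<theta> = \<theta> and x = x, OF less_imp_le[OF c] decr] .
  then have "\<theta> (x n) \<le> \<theta> (x 0)" for n
    by (rule decseqD) simp
  then have x_level: "x n \<in> {z \<in> Xi. \<theta> z \<le> \<theta> (x 0)}" for n
    using x_Xi by simp
  have "continuous_on U \<theta>"
    unfolding dc_obj_def[abs_def] by (intro continuous_intros continuous_on_f continuous_on_g)
  then have "continuous_on {z \<in> Xi. \<theta> z \<le> \<theta> (x 0)} \<theta>"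
    by (rule continuous_on_subset) (use Xi_subset_X X_subset_U in auto)
  then obtain z_min where "\<And>z. z \<in> {z \<in> Xi. \<theta> z \<le> \<theta> (x 0)} \<Longrightarrow> \<theta> z_min \<le> \<theta> z"
    using continuous_attains_inf[OF level_compact] x_level by blast
  then have steps: "(\<lambda>n. x (Suc n) - x n) \<longlonglongrightarrow> 0"
    using sufficient_decrease_imp_steps_tendsto_0[where \<theta> = \<theta> and x = x, OF c decr] x_level by blast
  obtain l r where "strict_mono r" "(x \<circ> r) \<longlonglongrightarrow> l"
    using compact_imp_seq_compact[OF level_compact] x_level unfolding seq_compact_def by metis
  then show ?thesis
    using limit_point_stationary[OF x_Xi iter steps] unfolding limit_point_def by blast
qed

end

theorem theorem2:
  fixes blk :: "'n::finite \<Rightarrow> 'i::finite"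
    and Xs :: "'i \<Rightarrow> (real^'n) set"
    and f g :: "'i \<Rightarrow> real^'n \<Rightarrow> real"
    and Df Dg :: "'i \<Rightarrow> real^'n \<Rightarrow> real^'n"
    and nc :: nat
    and h :: "nat \<Rightarrow> real^'n \<Rightarrow> real"
    and Dh :: "nat \<Rightarrow> real^'n \<Rightarrow> real^'n"
    and L \<tau> :: "'i \<Rightarrow> real"
    and x :: "nat \<Rightarrow> real^'n"
  assumes blocks_nonempty: "surj blk"
    and Xs_block: "\<And>i. Xs i \<subseteq> range (block_proj blk i)"
    \<comment> \<open>(A2)\<close>
    and A2: "\<And>i. Xs i \<noteq> {} \<and> closed (Xs i) \<and> convex (Xs i)"
    \<comment> \<open>(A1)\<close>
    and A1: "\<exists>U. open U \<and> prod_set blk Xs \<subseteq> U \<and>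
       (\<forall>i. convex_on U (f i) \<and> convex_on U (g i)
          \<and> (\<forall>z\<in>U. (f i has_derivative (\<lambda>v. Df i z \<bullet> v)) (at z))
          \<and> (\<forall>z\<in>U. (g i has_derivative (\<lambda>v. Dg i z \<bullet> v)) (at z))
          \<and> continuous_on U (Df i) \<and> continuous_on U (Dg i))
     \<and> (\<forall>j<nc. convex_on U (h j)
          \<and> (\<forall>z\<in>U. (h j has_derivative (\<lambda>v. Dh j z \<bullet> v)) (at z))
          \<and> continuous_on U (Dh j))"
    and Lip: "\<And>i u v. u \<in> prod_set blk Xs \<Longrightarrow> v \<in> prod_set blk Xs \<Longrightarrow>
       norm (Df i u - Df i v) \<le> L i * norm (u - v)"
    and tau_pos: "\<And>i. \<tau> i > 0"
    and tau_min: "Min (range \<tau>) > 2 * (\<Sum>i\<in>UNIV. L i)"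
    \<comment> \<open>Algorithm 1 with gamma = 1 started from x 0 in Xi\<close>
    and x0: "x 0 \<in> feas_set blk Xs nc h"
    \<comment> \<open>(A4)\<close>
    and A4: "compact {z \<in> feas_set blk Xs nc h. dc_obj f g z \<le> dc_obj f g (x 0)}"
    and iter: "\<And>\<nu>. x (Suc \<nu>) = xhat blk Xs nc h f g Df Dg \<tau> (x \<nu>)"
  shows "(\<exists>\<nu>. dc_stationary blk Xs nc h Df Dg (x \<nu>))
       \<or> ((\<exists>l. limit_point x l)
          \<and> (\<forall>l. limit_point x l \<longrightarrow> dc_stationary blk Xs nc h Df Dg l))"
proof (cases "\<exists>u\<in>prod_set blk Xs. \<exists>v\<in>prod_set blk Xs. u \<noteq> v")
  case False
  \<comment> \<open>Then \<open>\<Xi> = {x 0}\<close>; this case is needed because the Lipschitz bound gives \<open>L \<ge> 0\<close> only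
    when \<open>X\<close> has two points.\<close>
  then have "dc_stationary blk Xs nc h Df Dg (x 0)"
    using x0 by (auto simp: dc_stationary_def feas_set_def)
  then show ?thesis
    by blast
next
  case True
  then obtain u v where uv: "u \<in> prod_set blk Xs" "v \<in> prod_set blk Xs" "u \<noteq> v"
    by blast
  have L_nonneg: "0 \<le> L i" for i
    using Lip[OF uv(1,2), of i] uv(3) zero_le_mult_iff[of "L i" "norm (u - v)"]
      order_trans[OF norm_ge_zero] by fastforce
  have "\<exists>U. dc_problem blk Xs f g Df Dg nc h Dh L \<tau> U"
    using A1 A2 Lip L_nonneg tau_pos unfolding dc_problem_def
    by (elim exE conjE) (rule exI, intro conjI allI impI; (assumption | blast))
  then obtain U where "dc_problem blk Xs f g Df Dg nc h Dh L \<tau> U" ..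
  then interpret dc_problem blk Xs f g Df Dg nc h Dh L \<tau> U .
  show ?thesis
    using best_response_limit_points_stationary[OF _ x0 A4 iter] tau_min
    unfolding tmin_def by blast
qed

end
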